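(* Let $\Gamma\in(0,1]$, $d_0\in(0,1)$, $r=1-\Gamma+\Gamma d_0$, and let $(b(t),d(t))$ be the solution of $\dot b=d$, $\dot d=\frac{\Gamma d}{1-\Gamma b}(1-b-d)-d$ with $b(0)=0$, $d(0)=d_0$; set $a(t)=b(t)+d(t)$. Then $a$ is strictly increasing on $[0,\infty)$ with $a(0)=d_0$ and $\lim_{t\to\infty}a(t)=d_0/r$; in particular no $t$ satisfies $a(t)\ge\beta$ when $\beta\ge d_0/r$. For every $\beta\in[d_0,d_0/r)$ and $t\ge0$, one has $a(t)\ge\beta$ if and only if $t\ge T(\beta,d_0,\Gamma)$, where $$T(\beta,d_0,\Gamma)=\frac1r\ln\left(\frac{1-r}{1-\frac{\beta}{d_0}r}\right).$$ *)

theory Defs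
  imports Complex_Main
begin

definition r_param :: "real \<Rightarrow> real \<Rightarrow> real" where
  "r_param d0 \<Gamma> = 1 - \<Gamma> + \<Gamma> * d0"

definition T_time :: "real \<Rightarrow> real \<Rightarrow> real \<Rightarrow> real" where
  "T_time \<beta> d0 \<Gamma> = (1 / r_param d0 \<Gamma>) *
     ln ((1 - r_param d0 \<Gamma>) / (1 - (\<beta> / d0) * r_param d0 \<Gamma>))"

end

theory Submission
  imports Defs "HOL-Analysis.Analysis" "HOL-Real_Asymp.Real_Asymp"
begin

(* Along the system
     b' = d,   d' = \<Gamma> d (1 - b - d) / (1 - \<Gamma> b) - d
   the quotient Q = (d + r b - d0) / (1 - \<Gamma> b) has derivative zero wherever
   1 - \<Gamma> b \<noteq> 0, and Q(0) = 0.  Hence, as long as 1 - \<Gamma> b stays positive,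
   d = d0 - r b, so b solves the linear equation b' = d0 - r b and equals
   (d0/r)(1 - exp(-r t)) < d0/r.  Since \<Gamma> d0 / r \<le> 1 this keeps 1 - \<Gamma> b positive,
   and a real-induction argument on [0,\<infinity>) shows positivity holds forever.
   Consequently a = b + d = d0/r - c exp(-r t) with c = d0 (1 - r)/r > 0, and all
   claims follow from elementary properties of such exponential approach curves. *)

text \<open>Real induction on [0,\<infinity>): a continuous function that is positive at u whenever
  it is positive on [0,u) is positive everywhere.  The first zero would violate this.\<close>
lemma continuous_positive_on_halfline:
  fixes f :: "real \<Rightarrow> real"
  assumes cont: "continuous_on {0..} f"
    and step: "\<And>u. 0 \<le> u \<Longrightarrow> (\<And>s. 0 \<le> s \<Longrightarrow> s < u \<Longrightarrow> f s > 0) \<Longrightarrow> f u > 0"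
    and t: "0 \<le> t"
  shows "f t > 0"
proof (rule ccontr)
  assume neg: "\<not> f t > 0"
  define S where "S = {0..t} \<inter> f -` {..0}"
  have S_iff: "s \<in> S \<longleftrightarrow> 0 \<le> s \<and> s \<le> t \<and> f s \<le> 0" for s
    unfolding S_def by auto
  have "closed S"
    unfolding S_def
    by (rule continuous_closed_preimage[OF continuous_on_subset[OF cont]]) auto
  moreover have "t \<in> S" using neg t S_iff by simp
  moreover have below: "bdd_below S" using S_iff by (intro bdd_belowI[of _ 0]) auto
  ultimately have first: "Inf S \<in> S" using closed_contains_Inf by blast
  have "f s > 0" if "0 \<le> s" "s < Inf S" for s
  proof (rule ccontr)
    assume "\<not> f s > 0"
    with that first have "s \<in> S" using S_iff by force
    hence "Inf S \<le> s" using below by (simp add: cInf_lower)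
    thus False using that by simp
  qed
  with step have "f (Inf S) > 0" using first S_iff by blast
  thus False using first S_iff by force
qed

text \<open>Uniqueness for the linear equation b' = k - r b on [0,u]: the function
  (b - k/r) exp(r t) has derivative zero, so it keeps its initial value.\<close>
lemma linear_ode_solution:
  fixes b :: "real \<Rightarrow> real" and k r u t :: real
  assumes "r \<noteq> 0"
    and cont: "continuous_on {0..u} b"
    and deriv: "\<And>x. 0 \<le> x \<Longrightarrow> x < u \<Longrightarrow>
                  (b has_real_derivative (k - r * b x)) (at x within {0..u})"
    and t: "0 \<le> t" "t \<le> u"
  shows "b t = k / r + (b 0 - k / r) * exp (- r * t)"
proof -
  define w where "w s = (b s - k / r) * exp (r * s)" for s
  have "w t = w 0"
  proof (rule has_derivative_zero_unique_strong_interval[of "{u}" 0 u w "w 0"])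
    show "continuous_on {0..u} w"
      unfolding w_def by (intro continuous_intros cont)
    fix x assume x: "x \<in> {0..u} - {u}"
    have "(w has_real_derivative ((k - r * b x) * exp (r * x) + (b x - k / r) * (exp (r * x) * r)))
            (at x within {0..u})"
      unfolding w_def using x deriv[of x] by (auto intro!: derivative_eq_intros)
    moreover have "(k - r * b x) * exp (r * x) + (b x - k / r) * (exp (r * x) * r) = 0"
      using \<open>r \<noteq> 0\<close> by (simp add: field_simps)
    ultimately show "(w has_derivative (\<lambda>h. 0)) (at x within {0..u})"
      by (simp add: has_field_derivative_def lambda_zero)
  qed (use t in auto)
  hence "(b t - k / r) * exp (r * t) = b 0 - k / r" by (simp add: w_def)
  hence "b t - k / r = (b 0 - k / r) * exp (- r * t)"
    by (simp add: exp_minus field_simps)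
  thus ?thesis by simp
qed

lemma exp_approach_strict_mono:
  fixes a :: "real \<Rightarrow> real"
  assumes "c > 0" "r > 0" and a: "\<And>t. 0 \<le> t \<Longrightarrow> a t = L - c * exp (- r * t)"
  shows "strict_mono_on {0..} a"
proof (rule strict_mono_onI)
  fix x y :: real assume xy: "x \<in> {0..}" "y \<in> {0..}" "x < y"
  have "exp (- r * y) < exp (- r * x)" using xy \<open>r > 0\<close> by simp
  thus "a x < a y" using a xy \<open>c > 0\<close> by simp
qed

lemma exp_approach_limit:
  fixes a :: "real \<Rightarrow> real"
  assumes "r > 0" and a: "\<And>t. 0 \<le> t \<Longrightarrow> a t = L - c * exp (- r * t)"
  shows "(a \<longlongrightarrow> L) at_top"
proof -
  have "((\<lambda>t. L - c * exp (- r * t)) \<longlongrightarrow> L) at_top"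
    using \<open>r > 0\<close> by real_asymp
  moreover have "\<forall>\<^sub>F t in at_top. L - c * exp (- r * t) = a t"
    using eventually_ge_at_top[of 0] by eventually_elim (simp add: a)
  ultimately show ?thesis by (rule Lim_transform_eventually)
qed

lemma exp_approach_below_limit:
  fixes a :: "real \<Rightarrow> real"
  assumes "c > 0" and a: "\<And>t. 0 \<le> t \<Longrightarrow> a t = L - c * exp (- r * t)" and "0 \<le> t"
  shows "a t < L"
  using a[OF \<open>0 \<le> t\<close>] \<open>c > 0\<close> by simp

lemma exp_approach_threshold:
  fixes a :: "real \<Rightarrow> real"
  assumes "c > 0" "r > 0" and a: "\<And>t. 0 \<le> t \<Longrightarrow> a t = L - c * exp (- r * t)"
    and "\<beta> < L" "0 \<le> t"
  shows "\<beta> \<le> a t \<longleftrightarrow> (1 / r) * ln (c / (L - \<beta>)) \<le> t"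
proof -
  have gap: "L - \<beta> > 0" using \<open>\<beta> < L\<close> by simp
  have "\<beta> \<le> a t \<longleftrightarrow> c * exp (- r * t) \<le> L - \<beta>"
    using a[OF \<open>0 \<le> t\<close>] by auto
  also have "\<dots> \<longleftrightarrow> exp (- r * t) \<le> (L - \<beta>) / c"
    using \<open>c > 0\<close> by (simp add: pos_le_divide_eq mult.commute)
  also have "\<dots> \<longleftrightarrow> - r * t \<le> ln ((L - \<beta>) / c)"
    using gap \<open>c > 0\<close> by (simp add: ln_ge_iff)
  also have "ln ((L - \<beta>) / c) = - ln (c / (L - \<beta>))"
    using gap \<open>c > 0\<close> by (simp add: ln_div)
  also have "- r * t \<le> - ln (c / (L - \<beta>)) \<longleftrightarrow> (1 / r) * ln (c / (L - \<beta>)) \<le> t"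
    using \<open>r > 0\<close> by (simp add: field_simps)
  finally show ?thesis .
qed

locale bd_system =
  fixes \<Gamma> d0 :: real and b d :: "real \<Rightarrow> real"
  assumes hG: "0 < \<Gamma>" "\<Gamma> \<le> 1"
    and hd0: "0 < d0" "d0 < 1"
    and hb: "\<And>t. t \<ge> 0 \<Longrightarrow> (b has_real_derivative d t) (at t within {0..})"
    and hd: "\<And>t. t \<ge> 0 \<Longrightarrow>
       (d has_real_derivative
          (\<Gamma> * d t / (1 - \<Gamma> * b t) * (1 - b t - d t) - d t)) (at t within {0..})"
    and init: "b 0 = 0" "d 0 = d0"
begin

abbreviation r :: real where "r \<equiv> r_param d0 \<Gamma>"

lemma one_minus_r: "1 - r = \<Gamma> * (1 - d0)"
  unfolding r_param_def by (simp add: algebra_simps)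

lemma r_bounds: "0 < r" "r < 1"
proof -
  have "\<Gamma> * (1 - d0) < \<Gamma> * 1"
    using hG hd0 by (intro mult_strict_left_mono) auto
  hence "\<Gamma> * (1 - d0) < 1" using hG by linarith
  moreover have "\<Gamma> * (1 - d0) > 0" using hG hd0 by simp
  ultimately show "0 < r" "r < 1" using one_minus_r by linarith+
qed

text \<open>The level d0/r is below the singular level 1/\<Gamma> of the equation for d.\<close>
lemma limit_below_singularity: "\<Gamma> * (d0 / r) \<le> 1"
proof -
  have "\<Gamma> * d0 \<le> r" unfolding r_param_def using hG by simp
  thus ?thesis using r_bounds by (simp add: field_simps)
qed

lemma continuous_b: "continuous_on {0..} b"
  by (metis hb atLeast_iff DERIV_continuous continuous_on_eq_continuous_within)

text \<open>First integral: Q = (d + r b - d0) / (1 - \<Gamma> b) is constant along solutions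
  away from the singular set; the numerator of Q' vanishes since 1 - r = \<Gamma> (1 - d0).\<close>
lemma first_integral_deriv:
  assumes t: "t \<ge> 0" and ne: "1 - \<Gamma> * b t \<noteq> 0"
  shows "((\<lambda>s. (d s + r * b s - d0) / (1 - \<Gamma> * b s)) has_real_derivative 0) (at t within {0..})"
proof -
  let ?d' = "\<Gamma> * d t / (1 - \<Gamma> * b t) * (1 - b t - d t) - d t"
  have D: "((\<lambda>s. (d s + r * b s - d0) / (1 - \<Gamma> * b s)) has_real_derivative
      ((?d' + r * d t - 0) * (1 - \<Gamma> * b t) - (d t + r * b t - d0) * (0 - \<Gamma> * d t))
        / ((1 - \<Gamma> * b t) * (1 - \<Gamma> * b t))) (at t within {0..})"
    using ne by (intro DERIV_divide DERIV_diff DERIV_add DERIV_cmult hd hb t DERIV_const)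
  have "?d' * (1 - \<Gamma> * b t) = \<Gamma> * d t * (1 - b t - d t) - d t * (1 - \<Gamma> * b t)"
    using ne by (simp add: field_simps)
  hence "(?d' + r * d t) * (1 - \<Gamma> * b t) + (d t + r * b t - d0) * (\<Gamma> * d t)
           = d t * (\<Gamma> * (1 - d0) - (1 - r))"
    by (simp add: algebra_simps)
  also have "\<dots> = 0" using one_minus_r by simp
  finally show ?thesis using D by simp
qed

lemma conservation:
  assumes S: "convex S" "0 \<in> S" "S \<subseteq> {0..}"
    and pos: "\<And>s. s \<in> S \<Longrightarrow> 1 - \<Gamma> * b s > 0" and s: "s \<in> S"
  shows "d s = d0 - r * b s"
proof -
  have "\<exists>c. \<forall>x\<in>S. (d x + r * b x - d0) / (1 - \<Gamma> * b x) = c"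
  proof (rule has_field_derivative_zero_constant[OF \<open>convex S\<close>])
    fix x assume "x \<in> S"
    with S pos[of x] have "x \<ge> 0" "1 - \<Gamma> * b x \<noteq> 0" by auto
    with S show "((\<lambda>s. (d s + r * b s - d0) / (1 - \<Gamma> * b s)) has_field_derivative 0)
        (at x within S)"
      by (blast intro: DERIV_subset first_integral_deriv)
  qed
  then obtain c where c: "\<forall>x\<in>S. (d x + r * b x - d0) / (1 - \<Gamma> * b x) = c" by blast
  have "c = 0" using c \<open>0 \<in> S\<close> init by force
  with c s have "(d s + r * b s - d0) / (1 - \<Gamma> * b s) = 0" by simp
  thus ?thesis using pos[OF s] by simp
qed

lemma b_explicit_while_regular:
  assumes pos: "\<And>s. 0 \<le> s \<Longrightarrow> s < u \<Longrightarrow> 1 - \<Gamma> * b s > 0"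
    and t: "0 \<le> t" "t \<le> u"
  shows "b t = d0 / r * (1 - exp (- r * t))"
proof -
  have "b t = d0 / r + (b 0 - d0 / r) * exp (- r * t)"
  proof (rule linear_ode_solution[OF _ continuous_on_subset[OF continuous_b] _ t])
    fix x assume x: "0 \<le> x" "x < u"
    have "d x = d0 - r * b x"
      by (rule conservation[of "{0..<u}"]) (use x pos in auto)
    thus "(b has_real_derivative (d0 - r * b x)) (at x within {0..u})"
      using hb[of x] x by (auto intro: DERIV_subset)
  qed (use r_bounds in auto)
  thus ?thesis using init by (simp add: algebra_simps)
qed

lemma regular:
  assumes "t \<ge> 0"
  shows "1 - \<Gamma> * b t > 0"
proof (rule continuous_positive_on_halfline[OF _ _ assms])
  show "continuous_on {0..} (\<lambda>t. 1 - \<Gamma> * b t)"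
    by (intro continuous_intros continuous_b)
  fix u :: real
  assume "0 \<le> u" "\<And>s. 0 \<le> s \<Longrightarrow> s < u \<Longrightarrow> 1 - \<Gamma> * b s > 0"
  hence "b u = d0 / r * (1 - exp (- r * u))"
    using b_explicit_while_regular by blast
  also have "\<dots> < d0 / r" using r_bounds hd0 by (simp add: divide_strict_right_mono)
  finally have "\<Gamma> * b u < \<Gamma> * (d0 / r)" using hG(1) by (rule mult_strict_left_mono)
  thus "1 - \<Gamma> * b u > 0" using limit_below_singularity by simp
qed

lemma a_explicit:
  assumes "t \<ge> 0"
  shows "b t + d t = d0 / r - d0 * (1 - r) / r * exp (- r * t)"
proof -
  have "d t = d0 - r * b t"
    by (rule conservation[of "{0..}"]) (use regular assms in auto)
  hence "b t + d t = d0 + (1 - r) * b t" by (simp add: algebra_simps)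
  moreover have "b t = d0 / r * (1 - exp (- r * t))"
    using b_explicit_while_regular regular assms by blast
  ultimately show ?thesis using r_bounds by (simp add: field_simps)
qed

end

lemma T_time_as_exp_threshold:
  assumes "0 < d0" "0 < r_param d0 \<Gamma>" "\<beta> < d0 / r_param d0 \<Gamma>"
  shows "T_time \<beta> d0 \<Gamma> = (1 / r_param d0 \<Gamma>) *
           ln ((d0 * (1 - r_param d0 \<Gamma>) / r_param d0 \<Gamma>) / (d0 / r_param d0 \<Gamma> - \<beta>))"
proof -
  let ?r = "r_param d0 \<Gamma>"
  have "d0 - \<beta> * ?r > 0" using assms by (simp add: field_simps)
  hence "(1 - ?r) / (1 - \<beta> / d0 * ?r) = (d0 * (1 - ?r) / ?r) / (d0 / ?r - \<beta>)"
    using assms by (simp add: field_simps)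
  thus ?thesis unfolding T_time_def by simp
qed

theorem theorem5:
  fixes \<Gamma> d0 :: real and b d :: "real \<Rightarrow> real"
  assumes hG: "0 < \<Gamma>" "\<Gamma> \<le> 1"
    and hd0: "0 < d0" "d0 < 1"
    and hb: "\<And>t. t \<ge> 0 \<Longrightarrow> (b has_real_derivative d t) (at t within {0..})"
    and hd: "\<And>t. t \<ge> 0 \<Longrightarrow>
       (d has_real_derivative
          (\<Gamma> * d t / (1 - \<Gamma> * b t) * (1 - b t - d t) - d t)) (at t within {0..})"
    and init: "b 0 = 0" "d 0 = d0"
  shows "strict_mono_on {0..} (\<lambda>t. b t + d t)
    \<and> b 0 + d 0 = d0
    \<and> ((\<lambda>t. b t + d t) \<longlongrightarrow> d0 / r_param d0 \<Gamma>) at_top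
    \<and> (\<forall>\<beta>. \<beta> \<ge> d0 / r_param d0 \<Gamma> \<longrightarrow> \<not> (\<exists>t\<ge>0. b t + d t \<ge> \<beta>))
    \<and> (\<forall>\<beta> t. d0 \<le> \<beta> \<and> \<beta> < d0 / r_param d0 \<Gamma> \<and> t \<ge> 0 \<longrightarrow>
          (b t + d t \<ge> \<beta> \<longleftrightarrow> t \<ge> T_time \<beta> d0 \<Gamma>))"
proof -
  interpret bd_system \<Gamma> d0 b d by unfold_locales (use assms in auto)
  define c where "c = d0 * (1 - r) / r"
  have c: "c > 0" unfolding c_def using r_bounds hd0 by simp
  have a: "\<And>t. 0 \<le> t \<Longrightarrow> b t + d t = d0 / r - c * exp (- r * t)"
    unfolding c_def by (rule a_explicit)
  have unreachable: "\<not> (\<exists>t\<ge>0. b t + d t \<ge> \<beta>)" if "\<beta> \<ge> d0 / r" for \<beta>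
    using exp_approach_below_limit[OF c a] that by force
  have threshold: "b t + d t \<ge> \<beta> \<longleftrightarrow> t \<ge> T_time \<beta> d0 \<Gamma>"
    if "\<beta> < d0 / r" "t \<ge> 0" for \<beta> t
    using exp_approach_threshold[OF c r_bounds(1) a that]
      T_time_as_exp_threshold[OF hd0(1) r_bounds(1) that(1)] by (simp add: c_def)
  show ?thesis
    using exp_approach_strict_mono[OF c r_bounds(1) a] exp_approach_limit[OF r_bounds(1) a]
      unreachable threshold init by auto
qed

end
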